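(* Let $\gamma\in(\tfrac12,1]$ and $\varepsilon,\beta>0$. Then there exists a constant $c_2(\varepsilon,\beta,\gamma)$ such that for all $\xi_1\in\mathbb C$ and $\xi_2\in\mathbb R$ with $0\le\operatorname{Im}\xi_1\le1$, $|\xi_1|\ge\varepsilon$, $|\xi_2|\ge\varepsilon$, $|\operatorname{Re}\xi_1-\xi_2|\le\beta\operatorname{Im}\xi_1$, and for every $x\ge0$, $$\Big|e^{i\xi_1x}\int_0^x\frac{e^{-i\xi_1t}-e^{-i\xi_2t}}{(t+1)^\gamma}dt\Big|<\frac{c_2(\varepsilon,\beta,\gamma)}{(x+1)^\gamma}.$$ *)

theory Defs
  imports "HOL-Analysis.Analysis"
begin

end

theory Submission
  imports Defs
begin

(*
  Put s = Im \<xi>1 and c = -\<i>(\<xi>1 - \<xi>2). Then e^{\<i>\<xi>1 x}(e^{-\<i>\<xi>1 t} - e^{-\<i>\<xi>2 t})(t+1)^{-\<gamma>}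
  = e^{\<i>\<xi>1 x} e^{-\<i>\<xi>2 t} (e^{ct} - 1)(t+1)^{-\<gamma>}, and the hypothesis |Re \<xi>1 - \<xi>2| \<le> \<beta> s makes
  |c| \<le> (\<beta>+1) s comparable to Re c = s. Integrating by parts twice against the oscillation
  e^{-\<i>\<xi>2 t} (which costs a factor 1/|\<xi>2| \<le> 1/\<epsilon> each time) leaves boundary terms of size
  O((x+1)^{-\<gamma>}) and a remainder whose integrand, thanks to |e^{ct} - 1| \<le> 2|c| t e^{st} and
  |e^{\<i>\<xi>1 x}| = e^{-sx}, is dominated by the kernel e^{-s(x-t)}(s^2 (t+1)^{-\<gamma>} + s (t+1)^{-\<gamma>-1}).
  Splitting [0,x] at x/2, the integral of this kernel is O((x+1)^{-\<gamma>}) uniformly in s \<in> [0,1].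
*)

lemma norm_cis_minus_one_le: "cmod (cis y - 1) \<le> \<bar>y\<bar>"
proof -
  have "(cmod (cis y - 1))\<^sup>2 = (cos y - 1)\<^sup>2 + (sin y)\<^sup>2"
    by (simp add: cmod_power2)
  also have "\<dots> = 2 - 2 * cos y"
    using sin_cos_squared_add[of y] by (simp add: power2_eq_square algebra_simps)
  also have "\<dots> = 4 * (sin (y/2))\<^sup>2"
    using cos_double_sin[of "y/2"] by simp
  also have "\<dots> \<le> y\<^sup>2"
    using abs_sin_x_le_abs_x[of "y/2"] abs_le_square_iff[of "sin (y/2)" "y/2"] by (simp add: power_divide)
  finally show ?thesis
    by (metis abs_le_square_iff abs_norm_cancel)
qed

lemma norm_exp_minus_one_le:
  assumes "Re z \<le> 0"
  shows "cmod (exp z - 1) \<le> 2 * cmod z"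
proof -
  have "exp z - 1 = of_real (exp (Re z)) * (cis (Im z) - 1) + of_real (exp (Re z) - 1)"
    by (simp add: exp_eq_polar algebra_simps)
  hence "cmod (exp z - 1) \<le> exp (Re z) * cmod (cis (Im z) - 1) + \<bar>exp (Re z) - 1\<bar>"
    by (metis norm_mult norm_of_real norm_triangle_ineq abs_exp_cancel)
  also have "\<dots> \<le> 1 * \<bar>Im z\<bar> + \<bar>Re z\<bar>"
  proof (intro add_mono mult_mono)
    show "\<bar>exp (Re z) - 1\<bar> \<le> \<bar>Re z\<bar>"
      using exp_ge_add_one_self[of "Re z"] exp_le_one_iff[of "Re z"] assms by linarith
  qed (use assms norm_cis_minus_one_le in auto)
  also have "\<dots> \<le> 2 * cmod z"
    using abs_Re_le_cmod[of z] abs_Im_le_cmod[of z] by linarith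
  finally show ?thesis .
qed

lemma norm_exp_mult_minus_one_le:
  fixes c :: complex and t :: real
  assumes "0 \<le> Re c" and "0 \<le> t"
  shows "cmod (exp (c * t) - 1) \<le> 2 * cmod c * t * exp (Re c * t)"
proof -
  have "exp (c * t) - 1 = - exp (c * t) * (exp (- c * t) - 1)"
    by (simp add: algebra_simps exp_minus_inverse)
  hence "cmod (exp (c * t) - 1) = exp (Re c * t) * cmod (exp (- c * t) - 1)"
    by (simp add: norm_mult)
  also have "\<dots> \<le> exp (Re c * t) * (2 * cmod (- c * t))"
    using assms by (intro mult_left_mono norm_exp_minus_one_le) auto
  finally show ?thesis
    using assms by (simp add: norm_mult algebra_simps)
qed

lemma mult_powr_diff_one_le:
  fixes t e :: real
  assumes "0 \<le> t"
  shows "t * (t + 1) powr (e - 1) \<le> (t + 1) powr e"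
proof -
  have "(t + 1) * (t + 1) powr (e - 1) = (t + 1) powr e"
    using assms by (simp add: powr_mult_base)
  thus ?thesis by (smt (verit) mult_right_mono powr_ge_zero)
qed

lemma powr_le_of_half_le:
  fixes x t e :: real
  assumes "0 \<le> x" "x/2 \<le> t" "- 2 \<le> e" "e \<le> 0"
  shows "(t + 1) powr e \<le> 4 * (x + 1) powr e"
proof -
  have "(t + 1) powr e \<le> ((x + 1) / 2) powr e"
    using assms by (intro powr_mono2') auto
  also have "\<dots> = 2 powr (- e) * (x + 1) powr e"
    using assms by (simp add: powr_divide powr_minus_divide)
  also have "\<dots> \<le> 2 powr 2 * (x + 1) powr e"
    using assms by (intro mult_right_mono powr_mono) auto
  finally show ?thesis
    by simp
qed

lemma mult_exp_neg_le_inverse: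
  fixes s x :: real
  assumes "0 \<le> s" "s \<le> 1" "0 \<le> x"
  shows "s * exp (- s * x / 2) \<le> 2 / (x + 1)"
proof -
  have "s * (x + 1) = s * x + s"
    by (simp add: algebra_simps)
  hence "s * (x + 1) \<le> 2 * exp (s * x / 2)"
    using exp_ge_add_one_self[of "s * x / 2"] assms by linarith
  thus ?thesis
    using assms by (simp add: exp_minus field_simps)
qed

lemma mult_exp_neg_le_powr:
  fixes s x \<gamma> :: real
  assumes "0 \<le> s" "s \<le> 1" "0 \<le> x" "\<gamma> \<le> 1"
  shows "s * exp (- s * x) \<le> 2 * (x + 1) powr - \<gamma>"
proof -
  have "s * exp (- s * x) \<le> s * exp (- s * x / 2)"
    using assms by (intro mult_left_mono) auto
  also have "\<dots> \<le> 2 / (x + 1)"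
    using mult_exp_neg_le_inverse[OF assms(1-3)] .
  also have "\<dots> \<le> 2 * (x + 1) powr - \<gamma>"
    using powr_mono[of "- 1" "- \<gamma>" "x + 1"] assms by (simp add: powr_minus_divide)
  finally show ?thesis .
qed

lemma square_mult_exp_neg_le_inverse:
  fixes s x :: real
  assumes "0 \<le> s" "s \<le> 1" "0 \<le> x"
  shows "s\<^sup>2 * exp (- s * x / 2) * (x / 2) \<le> 9 / (x + 1)"
proof -
  have "(1 + s * x / 4)\<^sup>2 \<le> (exp (s * x / 4))\<^sup>2"
    using exp_ge_add_one_self[of "s * x / 4"] assms by (intro power_mono) auto
  also have "\<dots> = exp (s * x / 2)"
    by (simp add: power2_eq_square exp_add[symmetric])
  finally have exp_ge: "(1 + s * x / 4)\<^sup>2 \<le> exp (s * x / 2)" .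
  have "s\<^sup>2 * x \<le> s * x"
    using assms by (simp add: power2_eq_square mult_left_le_one_le mult.assoc)
  moreover have "(1 + s * x / 4)\<^sup>2 = 1 + s * x / 2 + (s * x)\<^sup>2 / 16"
    and "s\<^sup>2 * x * (x + 1) = (s * x)\<^sup>2 + s\<^sup>2 * x"
    by (simp_all add: power2_eq_square algebra_simps)
  moreover have "0 \<le> s * x"
    using assms by simp
  ultimately have "s\<^sup>2 * x * (x + 1) \<le> 18 * (1 + s * x / 4)\<^sup>2"
    using zero_le_power2[of "s * x"] by linarith
  hence "s\<^sup>2 * x * (x + 1) \<le> 18 * exp (s * x / 2)"
    using exp_ge by linarith
  thus ?thesis
    using assms by (simp add: exp_minus field_simps)
qed

lemma integral_le_antiderivative_diff:
  fixes f g G :: "real \<Rightarrow> real"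
  assumes "u \<le> v" and "f integrable_on {u..v}"
    and "\<And>t. t \<in> {u..v} \<Longrightarrow> f t \<le> g t"
    and "\<And>t. t \<in> {u..v} \<Longrightarrow> (G has_real_derivative g t) (at t within {u..v})"
  shows "integral {u..v} f \<le> G v - G u"
proof -
  have "(g has_integral G v - G u) {u..v}"
    using assms by (intro fundamental_theorem_of_calculus)
      (auto simp: has_real_derivative_iff_has_vector_derivative[symmetric])
  thus ?thesis
    using assms(2,3) by (metis has_integral_le integrable_integral)
qed

definition decay_kernel :: "real \<Rightarrow> real \<Rightarrow> real \<Rightarrow> real \<Rightarrow> real" where
  "decay_kernel s \<gamma> x t =
     exp (- s * (x - t)) * (s\<^sup>2 * (t + 1) powr - \<gamma> + s * (t + 1) powr (- \<gamma> - 1))"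

lemma continuous_on_decay_kernel: "continuous_on {0..x} (decay_kernel s \<gamma> x)"
  unfolding decay_kernel_def by (intro continuous_intros) auto

lemma decay_kernel_le_of_le_half:
  fixes s t x \<gamma> :: real
  assumes "0 \<le> s" "0 \<le> t" "t \<le> x/2" "0 \<le> \<gamma>"
  shows "decay_kernel s \<gamma> x t \<le> s * exp (- s * x / 2) * (s + (t + 1) powr (- \<gamma> - 1))"
proof -
  have exp_le: "exp (- s * (x - t)) \<le> exp (- s * x / 2)"
    using assms by (auto simp: mult_left_mono algebra_simps)
  have "(t + 1) powr - \<gamma> \<le> 1"
    using assms powr_mono2'[of "- \<gamma>" 1 "t + 1"] by simp
  hence "exp (- s * (x - t)) * (s\<^sup>2 * (t + 1) powr - \<gamma>) \<le> exp (- s * x / 2) * (s\<^sup>2 * 1)"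
    using exp_le by (intro mult_mono mult_left_mono) auto
  moreover have "exp (- s * (x - t)) * (s * (t + 1) powr (- \<gamma> - 1))
      \<le> exp (- s * x / 2) * (s * (t + 1) powr (- \<gamma> - 1))"
    using exp_le assms by (intro mult_right_mono) auto
  ultimately show ?thesis
    unfolding decay_kernel_def distrib_left by (simp add: power2_eq_square algebra_simps)
qed

lemma decay_kernel_le_of_half_le:
  fixes s x t \<gamma> :: real
  assumes "0 \<le> s" "0 \<le> x" "x/2 \<le> t" "t \<le> x" "0 \<le> \<gamma>" "\<gamma> \<le> 1"
  shows "decay_kernel s \<gamma> x t
    \<le> 4 * s\<^sup>2 * (x + 1) powr - \<gamma> * exp (- s * (x - t)) + 4 * s * (x + 1) powr (- \<gamma> - 1)"
proof -
  have "(t + 1) powr - \<gamma> \<le> 4 * (x + 1) powr - \<gamma>"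
    and r: "(t + 1) powr (- \<gamma> - 1) \<le> 4 * (x + 1) powr (- \<gamma> - 1)"
    using powr_le_of_half_le[of x t] assms by auto
  hence "exp (- s * (x - t)) * (s\<^sup>2 * (t + 1) powr - \<gamma>) \<le> exp (- s * (x - t)) * (s\<^sup>2 * (4 * (x + 1) powr - \<gamma>))"
    by (intro mult_left_mono) auto
  moreover have "exp (- s * (x - t)) * (s * (t + 1) powr (- \<gamma> - 1)) \<le> 1 * (s * (4 * (x + 1) powr (- \<gamma> - 1)))"
  proof (rule mult_mono)
    show "exp (- s * (x - t)) \<le> 1"
      using assms by simp
  qed (use r assms in \<open>auto intro: mult_left_mono\<close>)
  ultimately show ?thesis
    unfolding decay_kernel_def distrib_left by (simp add: algebra_simps)
qed

lemma integral_decay_kernel_lower_half_le: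
  fixes s \<gamma> x :: real
  assumes "0 \<le> s" "s \<le> 1" "0 \<le> x" "1/2 < \<gamma>" "\<gamma> \<le> 1"
  shows "integral {0..x/2} (decay_kernel s \<gamma> x) \<le> 13 * (x + 1) powr - \<gamma>"
proof -
  define A where "A = s * exp (- s * x / 2)"
  define G where "G = (\<lambda>t::real. s * A * t - A * (t + 1) powr - \<gamma> / \<gamma>)"
  have A_nonneg: "0 \<le> A"
    using assms by (simp add: A_def)
  have "integral {0..x/2} (decay_kernel s \<gamma> x) \<le> G (x/2) - G 0"
  proof (rule integral_le_antiderivative_diff)
    show "decay_kernel s \<gamma> x integrable_on {0..x/2}"
      by (intro integrable_continuous_interval continuous_on_subset[OF continuous_on_decay_kernel]) auto
    fix t assume t: "t \<in> {0..x/2}"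
    show "decay_kernel s \<gamma> x t \<le> s * A + A * (t + 1) powr (- \<gamma> - 1)"
      using decay_kernel_le_of_le_half[of s t x \<gamma>] t assms by (simp add: A_def algebra_simps)
    show "(G has_real_derivative s * A + A * (t + 1) powr (- \<gamma> - 1)) (at t within {0..x/2})"
      unfolding G_def using t assms by (auto intro!: derivative_eq_intros simp: field_simps)
  qed (use assms in auto)
  also have "G (x/2) - G 0 \<le> s * A * (x/2) + 2 * A"
  proof -
    have "A * (1 - (x/2 + 1) powr - \<gamma>) / \<gamma> \<le> A / \<gamma>"
      using A_nonneg assms by (intro divide_right_mono) (auto simp: mult_left_le)
    also have "\<dots> \<le> 2 * A"
      \<comment> \<open>the only place where \<open>1/2 < \<gamma>\<close> is used\<close>
      using A_nonneg assms mult_left_mono[of 1 "2 * \<gamma>" A] by (simp add: divide_le_eq algebra_simps)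
    finally show ?thesis
      by (simp add: G_def right_diff_distrib diff_divide_distrib)
  qed
  also have "\<dots> \<le> 13 / (x + 1)"
    using square_mult_exp_neg_le_inverse[of s x] mult_exp_neg_le_inverse[of s x] assms
    by (simp add: A_def power2_eq_square mult.assoc)
  also have "\<dots> \<le> 13 * (x + 1) powr - \<gamma>"
    using powr_mono[of "- 1" "- \<gamma>" "x + 1"] assms by (simp add: powr_minus_divide)
  finally show ?thesis .
qed

lemma integral_decay_kernel_upper_half_le:
  fixes s \<gamma> x :: real
  assumes "0 \<le> s" "s \<le> 1" "0 \<le> x" "0 < \<gamma>" "\<gamma> \<le> 1"
  shows "integral {x/2..x} (decay_kernel s \<gamma> x) \<le> 6 * (x + 1) powr - \<gamma>"
proof -
  define P where "P = (x + 1) powr - \<gamma>"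
  define Q where "Q = (x + 1) powr (- \<gamma> - 1)"
  define G where "G = (\<lambda>t::real. 4 * s * P * exp (- s * (x - t)) + 4 * s * Q * t)"
  have "integral {x/2..x} (decay_kernel s \<gamma> x) \<le> G x - G (x/2)"
  proof (rule integral_le_antiderivative_diff)
    show "decay_kernel s \<gamma> x integrable_on {x/2..x}"
      by (intro integrable_continuous_interval continuous_on_subset[OF continuous_on_decay_kernel]) auto
    fix t assume t: "t \<in> {x/2..x}"
    show "decay_kernel s \<gamma> x t \<le> 4 * s\<^sup>2 * P * exp (- s * (x - t)) + 4 * s * Q"
      using decay_kernel_le_of_half_le[of s x t \<gamma>] t assms by (simp add: P_def Q_def)
    show "(G has_real_derivative 4 * s\<^sup>2 * P * exp (- s * (x - t)) + 4 * s * Q) (at t within {x/2..x})"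
      unfolding G_def by (auto intro!: derivative_eq_intros simp: power2_eq_square)
  qed (use assms in auto)
  also have "G x - G (x/2) = 4 * P * (s - s * exp (- s * x / 2)) + 2 * (s * x) * Q"
    by (simp add: G_def algebra_simps)
  also have "\<dots> \<le> 4 * P * 1 + 2 * P"
  proof (rule add_mono)
    have "0 \<le> s * exp (- s * x / 2)"
      using assms by simp
    hence "s - s * exp (- s * x / 2) \<le> 1"
      using assms by linarith
    thus "4 * P * (s - s * exp (- s * x / 2)) \<le> 4 * P * 1"
      by (rule mult_left_mono) (simp add: P_def)
    have "s * x * Q \<le> (x + 1) * Q"
      using assms mult_left_le_one_le[of x s] by (intro mult_right_mono) (auto simp: Q_def)
    also have "(x + 1) * Q = P"
      using assms by (simp add: P_def Q_def powr_mult_base)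
    finally show "2 * (s * x) * Q \<le> 2 * P"
      by simp
  qed
  finally show ?thesis
    by (simp add: P_def)
qed

lemma integral_decay_kernel_le:
  fixes s \<gamma> x :: real
  assumes "0 \<le> s" "s \<le> 1" "0 \<le> x" "1/2 < \<gamma>" "\<gamma> \<le> 1"
  shows "integral {0..x} (decay_kernel s \<gamma> x) \<le> 19 * (x + 1) powr - \<gamma>"
proof -
  have "integral {0..x} (decay_kernel s \<gamma> x)
      = integral {0..x/2} (decay_kernel s \<gamma> x) + integral {x/2..x} (decay_kernel s \<gamma> x)"
    using assms by (intro Henstock_Kurzweil_Integration.integral_combine[symmetric]
        integrable_continuous_interval continuous_on_decay_kernel) auto
  thus ?thesis
    using integral_decay_kernel_lower_half_le[OF assms] integral_decay_kernel_upper_half_le[of s x \<gamma>] assms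
    by simp
qed

lemma has_vector_derivative_exp_mult:
  fixes c :: complex
  shows "((\<lambda>t. exp (c * of_real t)) has_vector_derivative c * exp (c * t)) (at t within S)"
  by (rule has_vector_derivative_real_field) (auto intro!: derivative_eq_intros)

definition osc_weight :: "complex \<Rightarrow> real \<Rightarrow> real \<Rightarrow> complex" where
  "osc_weight c \<gamma> t = (exp (c * t) - 1) * of_real ((t + 1) powr - \<gamma>)"

definition osc_weight' :: "complex \<Rightarrow> real \<Rightarrow> real \<Rightarrow> complex" where
  "osc_weight' c \<gamma> t =
     c * exp (c * t) * of_real ((t + 1) powr - \<gamma>) - (exp (c * t) - 1) * of_real (\<gamma> * (t + 1) powr (- \<gamma> - 1))"

definition osc_weight'' :: "complex \<Rightarrow> real \<Rightarrow> real \<Rightarrow> complex" where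
  "osc_weight'' c \<gamma> t =
     c\<^sup>2 * exp (c * t) * of_real ((t + 1) powr - \<gamma>) - 2 * c * exp (c * t) * of_real (\<gamma> * (t + 1) powr (- \<gamma> - 1))
     + (exp (c * t) - 1) * of_real (\<gamma> * (\<gamma> + 1) * (t + 1) powr (- \<gamma> - 2))"

lemma has_vector_derivative_osc_weight:
  "t > -1 \<Longrightarrow> (osc_weight c \<gamma> has_vector_derivative osc_weight' c \<gamma> t) (at t within S)"
  unfolding osc_weight_def osc_weight'_def
  by (auto intro!: derivative_eq_intros has_vector_derivative_exp_mult simp: algebra_simps)

lemma has_vector_derivative_osc_weight':
  "t > -1 \<Longrightarrow> (osc_weight' c \<gamma> has_vector_derivative osc_weight'' c \<gamma> t) (at t within S)"
  unfolding osc_weight'_def osc_weight''_def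
  by (auto intro!: derivative_eq_intros has_vector_derivative_exp_mult simp: algebra_simps power2_eq_square)

lemma norm_osc_weight'_le:
  fixes c :: complex and \<gamma> t :: real
  assumes "0 \<le> Re c" "0 \<le> t" "0 \<le> \<gamma>" "\<gamma> \<le> 1"
  shows "cmod (osc_weight' c \<gamma> t) \<le> 3 * cmod c * exp (Re c * t) * (t + 1) powr - \<gamma>"
proof -
  let ?E = "exp (Re c * t)" and ?p = "(t + 1) powr - \<gamma>" and ?r = "(t + 1) powr (- \<gamma> - 1)"
  have "cmod (osc_weight' c \<gamma> t) \<le> cmod c * ?E * ?p + cmod (exp (c * t) - 1) * (\<gamma> * ?r)"
    unfolding osc_weight'_def
    using norm_triangle_ineq4[of "c * exp (c * t) * of_real ?p" "(exp (c * t) - 1) * of_real (\<gamma> * ?r)"] assms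
    by (simp add: norm_mult)
  also have "\<dots> \<le> cmod c * ?E * ?p + (2 * cmod c * t * ?E) * (1 * ?r)"
    using norm_exp_mult_minus_one_le[of c t] assms by (intro add_left_mono mult_mono) auto
  also have "\<dots> \<le> cmod c * ?E * ?p + 2 * cmod c * ?E * ?p"
    using mult_powr_diff_one_le[of t "- \<gamma>"] assms
    by (simp add: mult_left_mono mult.assoc mult.left_commute[of t])
  finally show ?thesis
    by simp
qed

lemma norm_osc_weight''_le:
  fixes c :: complex and \<gamma> t :: real
  assumes "0 \<le> Re c" "0 \<le> t" "0 \<le> \<gamma>" "\<gamma> \<le> 1"
  shows "cmod (osc_weight'' c \<gamma> t)
    \<le> exp (Re c * t) * ((cmod c)\<^sup>2 * (t + 1) powr - \<gamma> + 6 * cmod c * (t + 1) powr (- \<gamma> - 1))"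
proof -
  let ?E = "exp (Re c * t)" and ?p = "(t + 1) powr - \<gamma>"
    and ?r = "(t + 1) powr (- \<gamma> - 1)" and ?q = "(t + 1) powr (- \<gamma> - 2)"
  have "cmod (osc_weight'' c \<gamma> t)
      \<le> (cmod c)\<^sup>2 * ?E * ?p + 2 * cmod c * ?E * (\<gamma> * ?r) + cmod (exp (c * t) - 1) * (\<gamma> * (\<gamma> + 1) * ?q)"
    unfolding osc_weight''_def
    using norm_triangle_ineq4[of "c\<^sup>2 * exp (c * t) * of_real ?p" "2 * c * exp (c * t) * of_real (\<gamma> * ?r)"]
      norm_triangle_ineq[of "c\<^sup>2 * exp (c * t) * of_real ?p - 2 * c * exp (c * t) * of_real (\<gamma> * ?r)"
        "(exp (c * t) - 1) * of_real (\<gamma> * (\<gamma> + 1) * ?q)"] assms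
    by (simp add: norm_mult norm_power)
  also have "\<dots> \<le> (cmod c)\<^sup>2 * ?E * ?p + 2 * cmod c * ?E * ?r + (2 * cmod c * t * ?E) * (2 * ?q)"
  proof -
    have "2 * cmod c * ?E * (\<gamma> * ?r) \<le> 2 * cmod c * ?E * (1 * ?r)"
      using assms by (intro mult_left_mono mult_right_mono) auto
    moreover have "\<gamma> * (\<gamma> + 1) * ?q \<le> 2 * ?q"
      using assms mult_mono[of \<gamma> 1 "\<gamma> + 1" 2] by (intro mult_right_mono) auto
    hence "cmod (exp (c * t) - 1) * (\<gamma> * (\<gamma> + 1) * ?q) \<le> (2 * cmod c * t * ?E) * (2 * ?q)"
      using assms norm_exp_mult_minus_one_le[of c t] by (intro mult_mono) auto
    ultimately show ?thesis
      by simp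
  qed
  also have "(2 * cmod c * t * ?E) * (2 * ?q) = 4 * cmod c * ?E * (t * ?q)"
    by simp
  also have "\<dots> \<le> 4 * cmod c * ?E * ?r"
  proof (rule mult_left_mono)
    show "t * ?q \<le> ?r"
      using mult_powr_diff_one_le[of t "- \<gamma> - 1"] assms by (metis diff_diff_eq one_add_one)
  qed simp
  finally show ?thesis
    by (simp add: algebra_simps)
qed

lemma integral_exp_mult_by_parts_twice:
  fixes g g' g'' :: "real \<Rightarrow> complex" and b u v :: real
  assumes "b \<noteq> 0" "u \<le> v"
    and g: "\<And>t. t \<in> {u..v} \<Longrightarrow> (g has_vector_derivative g' t) (at t within {u..v})"
    and g': "\<And>t. t \<in> {u..v} \<Longrightarrow> (g' has_vector_derivative g'' t) (at t within {u..v})"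
  defines "\<Phi> \<equiv> \<lambda>t. exp (- \<i> * b * t) * (\<i> / b * g t + 1 / b\<^sup>2 * g' t)"
  shows "(\<lambda>t. exp (- \<i> * b * t) * g'' t) integrable_on {u..v}"
    and "integral {u..v} (\<lambda>t. exp (- \<i> * b * t) * g t)
           = \<Phi> v - \<Phi> u - integral {u..v} (\<lambda>t. exp (- \<i> * b * t) * g'' t) / b\<^sup>2"
proof -
  let ?E = "\<lambda>t. exp (- \<i> * b * t)"
  have FTC: "((\<lambda>t. ?E t * g t + ?E t * g'' t / b\<^sup>2) has_integral \<Phi> v - \<Phi> u) {u..v}"
  proof (rule fundamental_theorem_of_calculus)
    fix t assume t: "t \<in> {u..v}"
    have "((\<lambda>t. \<i> / b * g t + 1 / b\<^sup>2 * g' t) has_vector_derivative \<i> / b * g' t + 1 / b\<^sup>2 * g'' t)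
        (at t within {u..v})"
      using g[OF t] g'[OF t] by (intro has_vector_derivative_add has_vector_derivative_mult_right)
    from has_vector_derivative_mult[OF has_vector_derivative_exp_mult this]
    show "(\<Phi> has_vector_derivative ?E t * g t + ?E t * g'' t / b\<^sup>2) (at t within {u..v})"
      unfolding \<Phi>_def
      by (rule has_vector_derivative_eq_rhs) (use \<open>b \<noteq> 0\<close> in \<open>simp add: field_simps power2_eq_square\<close>)
  qed fact
  have "(\<lambda>t. ?E t * g t) integrable_on {u..v}"
    using g by (intro integrable_continuous_interval continuous_intros continuous_on_vector_derivative) auto
  from has_integral_diff[OF FTC integrable_integral[OF this]]
  have "((\<lambda>t. ?E t * g'' t / b\<^sup>2) has_integral \<Phi> v - \<Phi> u - integral {u..v} (\<lambda>t. ?E t * g t)) {u..v}"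
    by simp
  from has_integral_mult_right[OF this, of "b\<^sup>2"]
  have "((\<lambda>t. ?E t * g'' t) has_integral b\<^sup>2 * (\<Phi> v - \<Phi> u - integral {u..v} (\<lambda>t. ?E t * g t))) {u..v}"
    using \<open>b \<noteq> 0\<close> by simp
  thus "(\<lambda>t. ?E t * g'' t) integrable_on {u..v}"
    and "integral {u..v} (\<lambda>t. ?E t * g t) = \<Phi> v - \<Phi> u - integral {u..v} (\<lambda>t. ?E t * g'' t) / b\<^sup>2"
    using assms(1) by (auto simp: integral_unique has_integral_integrable)
qed

lemma norm_integral_exp_mult_osc_weight''_le:
  fixes c :: complex and b k x \<gamma> :: real
  assumes "0 \<le> Re c" "Re c \<le> 1" "0 \<le> k" "cmod c \<le> k * Re c" "0 \<le> x" "1/2 < \<gamma>" "\<gamma> \<le> 1"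
    and int: "(\<lambda>t. exp (- \<i> * b * t) * osc_weight'' c \<gamma> t) integrable_on {0..x}"
  shows "exp (- Re c * x) * cmod (integral {0..x} (\<lambda>t. exp (- \<i> * b * t) * osc_weight'' c \<gamma> t))
    \<le> 19 * (k\<^sup>2 + 6 * k) * (x + 1) powr - \<gamma>"
proof -
  define s where "s = Re c"
  have s: "0 \<le> s" "s \<le> 1" "cmod c \<le> k * s"
    using assms by (auto simp: s_def)
  have pointwise: "cmod (exp (- \<i> * b * t) * osc_weight'' c \<gamma> t)
      \<le> exp (s * x) * ((k\<^sup>2 + 6 * k) * decay_kernel s \<gamma> x t)" if "t \<in> {0..x}" for t
  proof -
    let ?p = "(t + 1) powr - \<gamma>" and ?r = "(t + 1) powr (- \<gamma> - 1)"
    have exp_shift: "exp (s * t) = exp (s * x) * exp (- s * (x - t))"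
      by (simp add: algebra_simps flip: exp_add)
    have "cmod (exp (- \<i> * b * t) * osc_weight'' c \<gamma> t) = cmod (osc_weight'' c \<gamma> t)"
      by (simp add: norm_mult)
    also have "\<dots> \<le> exp (s * t) * ((cmod c)\<^sup>2 * ?p + 6 * cmod c * ?r)"
      using norm_osc_weight''_le[of c t \<gamma>] that assms by (simp add: s_def)
    also have "\<dots> \<le> exp (s * t) * ((k * s)\<^sup>2 * ?p + 6 * (k * s) * ?r)"
      using s by (intro mult_left_mono add_mono mult_right_mono power_mono) auto
    also have "\<dots> \<le> exp (s * t) * ((k\<^sup>2 + 6 * k) * (s\<^sup>2 * ?p + s * ?r))"
      using s assms by (intro mult_left_mono) (auto simp: power2_eq_square algebra_simps)
    also have "\<dots> = exp (s * x) * ((k\<^sup>2 + 6 * k) * decay_kernel s \<gamma> x t)"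
      unfolding decay_kernel_def exp_shift by (simp add: algebra_simps)
    finally show ?thesis .
  qed
  have "cmod (integral {0..x} (\<lambda>t. exp (- \<i> * b * t) * osc_weight'' c \<gamma> t))
      \<le> integral {0..x} (\<lambda>t. exp (s * x) * ((k\<^sup>2 + 6 * k) * decay_kernel s \<gamma> x t))"
    by (rule integral_norm_bound_integral[OF int _ pointwise])
      (intro integrable_continuous_interval continuous_intros continuous_on_decay_kernel)
  also have "\<dots> = exp (s * x) * ((k\<^sup>2 + 6 * k) * integral {0..x} (decay_kernel s \<gamma> x))"
    by simp
  also have "\<dots> \<le> exp (s * x) * ((k\<^sup>2 + 6 * k) * (19 * (x + 1) powr - \<gamma>))"
    using integral_decay_kernel_le[of s x \<gamma>] s assms by (intro mult_left_mono) auto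
  finally show ?thesis
    by (simp add: s_def exp_minus field_simps)
qed

lemma norm_by_parts_upper_term_le:
  fixes c :: complex and b k \<epsilon> x \<gamma> :: real
  assumes "0 \<le> Re c" "cmod c \<le> k" "0 \<le> x" "0 \<le> \<gamma>" "\<gamma> \<le> 1" "0 < \<epsilon>" "\<epsilon> \<le> \<bar>b\<bar>"
  shows "exp (- Re c * x) * cmod (\<i> / b * osc_weight c \<gamma> x + 1 / b\<^sup>2 * osc_weight' c \<gamma> x)
    \<le> (2 / \<epsilon> + 3 * k / \<epsilon>\<^sup>2) * (x + 1) powr - \<gamma>"
proof -
  let ?P = "(x + 1) powr - \<gamma>"
  have "cmod (exp (c * x) - 1) \<le> exp (Re c * x) + 1"
    using norm_triangle_ineq4[of "exp (c * x)" 1] by simp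
  hence "cmod (osc_weight c \<gamma> x) \<le> (exp (Re c * x) + 1) * ?P"
    unfolding osc_weight_def by (simp add: norm_mult mult_right_mono)
  hence "exp (- Re c * x) * cmod (osc_weight c \<gamma> x) \<le> exp (- Re c * x) * ((exp (Re c * x) + 1) * ?P)"
    by (rule mult_left_mono) simp
  also have "\<dots> \<le> 2 * ?P"
    using assms by (simp add: exp_minus field_simps)
  finally have osc: "exp (- Re c * x) * cmod (osc_weight c \<gamma> x) \<le> 2 * ?P" .
  have "exp (- Re c * x) * cmod (osc_weight' c \<gamma> x) \<le> exp (- Re c * x) * (3 * cmod c * exp (Re c * x) * ?P)"
    using assms by (intro mult_left_mono norm_osc_weight'_le) auto
  also have "\<dots> = 3 * cmod c * ?P"
    by (simp add: exp_minus field_simps)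
  also have "\<dots> \<le> 3 * k * ?P"
    using assms by (intro mult_right_mono) auto
  finally have osc': "exp (- Re c * x) * cmod (osc_weight' c \<gamma> x) \<le> 3 * k * ?P" .
  have "cmod (\<i> / b * osc_weight c \<gamma> x + 1 / b\<^sup>2 * osc_weight' c \<gamma> x)
      \<le> cmod (osc_weight c \<gamma> x) / \<epsilon> + cmod (osc_weight' c \<gamma> x) / \<epsilon>\<^sup>2"
  proof -
    have "\<epsilon>\<^sup>2 \<le> b\<^sup>2"
      using assms by (metis abs_le_square_iff abs_of_pos)
    hence "cmod (osc_weight c \<gamma> x) / \<bar>b\<bar> \<le> cmod (osc_weight c \<gamma> x) / \<epsilon>"
      and "cmod (osc_weight' c \<gamma> x) / b\<^sup>2 \<le> cmod (osc_weight' c \<gamma> x) / \<epsilon>\<^sup>2"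
      using assms by (auto intro!: divide_left_mono)
    thus ?thesis
      using norm_triangle_ineq[of "\<i> / b * osc_weight c \<gamma> x" "1 / b\<^sup>2 * osc_weight' c \<gamma> x"]
      by (simp add: norm_mult norm_divide norm_power)
  qed
  hence "exp (- Re c * x) * cmod (\<i> / b * osc_weight c \<gamma> x + 1 / b\<^sup>2 * osc_weight' c \<gamma> x)
      \<le> (exp (- Re c * x) * cmod (osc_weight c \<gamma> x)) / \<epsilon> + (exp (- Re c * x) * cmod (osc_weight' c \<gamma> x)) / \<epsilon>\<^sup>2"
    by (smt (verit) exp_gt_zero mult_left_mono distrib_left times_divide_eq_right)
  also have "\<dots> \<le> 2 * ?P / \<epsilon> + 3 * k * ?P / \<epsilon>\<^sup>2"
    using osc osc' assms by (intro add_mono divide_right_mono) auto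
  finally show ?thesis
    by (simp add: algebra_simps add_divide_distrib)
qed

lemma norm_by_parts_lower_term_le:
  fixes c :: complex and b k \<epsilon> x \<gamma> :: real
  assumes "0 \<le> Re c" "Re c \<le> 1" "0 \<le> k" "cmod c \<le> k * Re c" "0 \<le> x" "\<gamma> \<le> 1"
    and "0 < \<epsilon>" "\<epsilon> \<le> \<bar>b\<bar>"
  shows "exp (- Re c * x) * cmod (\<i> / b * osc_weight c \<gamma> 0 + 1 / b\<^sup>2 * osc_weight' c \<gamma> 0)
    \<le> 2 * k / \<epsilon>\<^sup>2 * (x + 1) powr - \<gamma>"
proof -
  have "\<epsilon>\<^sup>2 \<le> b\<^sup>2"
    using assms by (metis abs_le_square_iff abs_of_pos)
  let ?\<Phi>\<^sub>0 = "\<i> / b * osc_weight c \<gamma> 0 + 1 / b\<^sup>2 * osc_weight' c \<gamma> 0"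
  have "cmod ?\<Phi>\<^sub>0 = cmod c / b\<^sup>2"
    by (simp add: osc_weight_def osc_weight'_def norm_divide norm_power)
  also have "\<dots> \<le> k * Re c / \<epsilon>\<^sup>2"
    using \<open>\<epsilon>\<^sup>2 \<le> b\<^sup>2\<close> assms norm_ge_zero[of c] by (intro frac_le) auto
  finally have "exp (- Re c * x) * cmod ?\<Phi>\<^sub>0 \<le> exp (- Re c * x) * (k * Re c / \<epsilon>\<^sup>2)"
    by (rule mult_left_mono) simp
  also have "\<dots> = k / \<epsilon>\<^sup>2 * (Re c * exp (- Re c * x))"
    by simp
  also have "\<dots> \<le> k / \<epsilon>\<^sup>2 * (2 * (x + 1) powr - \<gamma>)"
    using mult_exp_neg_le_powr[of "Re c" x \<gamma>] assms by (intro mult_left_mono) auto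
  finally show ?thesis
    by (simp add: field_simps)
qed

lemma oscillatory_integrand_eq:
  fixes a :: complex and b \<gamma> t :: real
  shows "(exp (- \<i> * a * t) - exp (- \<i> * b * t)) / of_real ((t + 1) powr \<gamma>)
    = exp (- \<i> * b * t) * osc_weight (- \<i> * (a - b)) \<gamma> t"
proof -
  have "exp (- \<i> * b * t) * (exp (- \<i> * (a - b) * t) - 1) = exp (- \<i> * a * t) - exp (- \<i> * b * t)"
    by (simp add: algebra_simps flip: exp_add)
  thus ?thesis
    by (simp add: osc_weight_def powr_minus divide_inverse mult.assoc)
qed

lemma norm_exp_mult_oscillatory_integral_le:
  fixes a :: complex and b k \<epsilon> \<gamma> x :: real
  assumes "1/2 < \<gamma>" "\<gamma> \<le> 1" "0 < \<epsilon>" "\<epsilon> \<le> \<bar>b\<bar>" "0 \<le> Im a" "Im a \<le> 1"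
    and "0 \<le> k" "cmod (a - b) \<le> k * Im a" "0 \<le> x"
  shows "cmod (exp (\<i> * a * x) *
           integral {0..x} (\<lambda>t. (exp (- \<i> * a * t) - exp (- \<i> * b * t)) / of_real ((t + 1) powr \<gamma>)))
    \<le> (2 / \<epsilon> + (19 * k\<^sup>2 + 119 * k) / \<epsilon>\<^sup>2) * (x + 1) powr - \<gamma>"
proof -
  define c where "c = - \<i> * (a - b)"
  define \<Phi> where "\<Phi> = (\<lambda>t. exp (- \<i> * b * t) * (\<i> / b * osc_weight c \<gamma> t + 1 / b\<^sup>2 * osc_weight' c \<gamma> t))"
  define J where "J = integral {0..x} (\<lambda>t. exp (- \<i> * b * t) * osc_weight'' c \<gamma> t)"
  let ?P = "(x + 1) powr - \<gamma>"
  have c: "Re c = Im a" "cmod c \<le> k * Re c" "cmod c \<le> k"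
    using assms mult_left_le[of "Im a" k] by (auto simp: c_def norm_mult)
  have "b \<noteq> 0" and "\<epsilon>\<^sup>2 \<le> b\<^sup>2"
    using assms by (auto simp: abs_le_square_iff[symmetric])
  have "t \<in> {0..x} \<Longrightarrow> (osc_weight c \<gamma> has_vector_derivative osc_weight' c \<gamma> t) (at t within {0..x})"
    and "t \<in> {0..x} \<Longrightarrow> (osc_weight' c \<gamma> has_vector_derivative osc_weight'' c \<gamma> t) (at t within {0..x})"
    for t
    by (auto intro: has_vector_derivative_osc_weight has_vector_derivative_osc_weight')
  note parts = integral_exp_mult_by_parts_twice[OF \<open>b \<noteq> 0\<close> \<open>0 \<le> x\<close> this]
  have upper: "exp (- Re c * x) * cmod (\<Phi> x) \<le> (2 / \<epsilon> + 3 * k / \<epsilon>\<^sup>2) * ?P"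
    using norm_by_parts_upper_term_le[of c k x \<gamma> \<epsilon> b] assms c by (simp add: \<Phi>_def norm_mult)
  have lower: "exp (- Re c * x) * cmod (\<Phi> 0) \<le> 2 * k / \<epsilon>\<^sup>2 * ?P"
    using norm_by_parts_lower_term_le[of c k x \<gamma> \<epsilon> b] assms c by (simp add: \<Phi>_def norm_mult)
  have "exp (- Re c * x) * cmod J \<le> 19 * (k\<^sup>2 + 6 * k) * ?P"
    unfolding J_def using c assms parts(1) by (intro norm_integral_exp_mult_osc_weight''_le) auto
  hence remainder: "exp (- Re c * x) * (cmod J / \<epsilon>\<^sup>2) \<le> 19 * (k\<^sup>2 + 6 * k) / \<epsilon>\<^sup>2 * ?P"
    using assms by (simp add: divide_right_mono)
  have "exp (\<i> * a * x) *
      integral {0..x} (\<lambda>t. (exp (- \<i> * a * t) - exp (- \<i> * b * t)) / of_real ((t + 1) powr \<gamma>))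
      = exp (\<i> * a * x) * integral {0..x} (\<lambda>t. exp (- \<i> * b * t) * osc_weight c \<gamma> t)"
    unfolding c_def oscillatory_integrand_eq ..
  also have "\<dots> = exp (\<i> * a * x) * (\<Phi> x - \<Phi> 0 - J / b\<^sup>2)"
    using parts(2) by (simp add: \<Phi>_def J_def)
  also have "cmod \<dots> \<le> exp (- Re c * x) * (cmod (\<Phi> x) + cmod (\<Phi> 0) + cmod J / \<epsilon>\<^sup>2)"
  proof -
    have "cmod (\<Phi> x - \<Phi> 0 - J / b\<^sup>2) \<le> cmod (\<Phi> x) + cmod (\<Phi> 0) + cmod (J / b\<^sup>2)"
      using norm_triangle_ineq4[of "\<Phi> x - \<Phi> 0" "J / b\<^sup>2"] norm_triangle_ineq4[of "\<Phi> x" "\<Phi> 0"]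
      by linarith
    also have "cmod (J / b\<^sup>2) \<le> cmod J / \<epsilon>\<^sup>2"
      using \<open>\<epsilon>\<^sup>2 \<le> b\<^sup>2\<close> assms by (simp add: norm_divide norm_power divide_left_mono)
    finally show ?thesis
      using c by (simp add: norm_mult mult_left_mono)
  qed
  also have "\<dots> \<le> (2 / \<epsilon> + 3 * k / \<epsilon>\<^sup>2) * ?P + 2 * k / \<epsilon>\<^sup>2 * ?P + 19 * (k\<^sup>2 + 6 * k) / \<epsilon>\<^sup>2 * ?P"
    using upper lower remainder by (simp add: distrib_left)
  also have "\<dots> = (2 / \<epsilon> + (19 * k\<^sup>2 + 119 * k) / \<epsilon>\<^sup>2) * ?P"
    by (simp add: algebra_simps add_divide_distrib)
  finally show ?thesis .
qed

theorem lemma3p3: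
  fixes \<gamma> \<epsilon> \<beta> :: real
  assumes "1/2 < \<gamma>" and "\<gamma> \<le> 1" and "\<epsilon> > 0" and "\<beta> > 0"
  shows "\<exists>c2::real. \<forall>(\<xi>1::complex) (\<xi>2::real) (x::real).
           0 \<le> Im \<xi>1 \<and> Im \<xi>1 \<le> 1 \<and> cmod \<xi>1 \<ge> \<epsilon> \<and> \<bar>\<xi>2\<bar> \<ge> \<epsilon> \<and>
           \<bar>Re \<xi>1 - \<xi>2\<bar> \<le> \<beta> * Im \<xi>1 \<and> x \<ge> 0 \<longrightarrow>
           cmod (exp (\<i> * \<xi>1 * of_real x) *
                 integral {0..x} (\<lambda>t. (exp (- \<i> * \<xi>1 * of_real t) - exp (- \<i> * of_real \<xi>2 * of_real t))
                                       / of_real ((t + 1) powr \<gamma>)))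
           < c2 / (x + 1) powr \<gamma>"
proof -
  define B where "B = 2 / \<epsilon> + (19 * (\<beta> + 1)\<^sup>2 + 119 * (\<beta> + 1)) / \<epsilon>\<^sup>2"
  show ?thesis
  proof (intro exI[of _ "B + 1"] allI impI, elim conjE)
    fix \<xi>1 :: complex and \<xi>2 x :: real
    assume "0 \<le> Im \<xi>1" "Im \<xi>1 \<le> 1" "\<epsilon> \<le> \<bar>\<xi>2\<bar>" "\<bar>Re \<xi>1 - \<xi>2\<bar> \<le> \<beta> * Im \<xi>1" "0 \<le> x"
    moreover from this have "cmod (\<xi>1 - \<xi>2) \<le> (\<beta> + 1) * Im \<xi>1"
      using cmod_le[of "\<xi>1 - \<xi>2"] by (simp add: algebra_simps)
    ultimately have "cmod (exp (\<i> * \<xi>1 * x) *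
        integral {0..x} (\<lambda>t. (exp (- \<i> * \<xi>1 * t) - exp (- \<i> * \<xi>2 * t)) / of_real ((t + 1) powr \<gamma>)))
        \<le> B * (x + 1) powr - \<gamma>"
      unfolding B_def using assms by (intro norm_exp_mult_oscillatory_integral_le) auto
    also have "\<dots> < (B + 1) / (x + 1) powr \<gamma>"
      using \<open>0 \<le> x\<close> by (simp add: powr_minus divide_inverse)
    finally show "cmod (exp (\<i> * \<xi>1 * x) *
        integral {0..x} (\<lambda>t. (exp (- \<i> * \<xi>1 * t) - exp (- \<i> * \<xi>2 * t)) / of_real ((t + 1) powr \<gamma>)))
        < (B + 1) / (x + 1) powr \<gamma>" .
  qed
qed

end
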